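(* Let $G$ be a graph, let $\mathcal H$ be a family of subgraphs of $G$ each inducing a connected subgraph, and suppose $G$ has a tree decomposition that is $k$-sparse with respect to $\mathcal H$. Then $(G,\mathcal H)$ admits a dual support $Q^*$ with $\mathrm{tw}(Q^* )\le k$.
   Context: A subgraph $H$ of $G$ is identified with its vertex set $V(H)$. A tree decomposition $(T,\{B_z\})$ of $G$ is $k$-sparse with respect to $\mathcal H$ if every bag $B_z$ intersects at most $k$ members of $\mathcal H$. A dual support for $(G,\mathcal H)$ is a graph $Q^*$ whose vertex set is $\mathcal H$ (one vertex per member) such that for every $v\in V(G)$ the set $\mathcal H_v=\{H\in\mathcal H: v\in V(H)\}$ induces a connected subgraph of $Q^*$. $\mathrm{tw}$ denotes treewidth. *)

theory Defs
  imports Main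
begin

text \<open>Finite simple (undirected) graphs: a finite vertex set V and a symmetric,
irreflexive edge relation E on V (each undirected edge stored as both ordered pairs).\<close>
definition graph :: "'a set \<Rightarrow> ('a \<times> 'a) set \<Rightarrow> bool" where
  "graph V E \<longleftrightarrow> finite V \<and> E \<subseteq> V \<times> V \<and> (\<forall>x y. (x,y) \<in> E \<longrightarrow> (y,x) \<in> E)
                  \<and> (\<forall>x. (x,x) \<notin> E)"

text \<open>S induces a connected subgraph of (V,E): any two vertices of S are joined
by a path inside S (the empty set counts as connected).\<close>
definition connected_in :: "'a set \<Rightarrow> ('a \<times> 'a) set \<Rightarrow> 'a set \<Rightarrow> bool" where
  "connected_in V E S \<longleftrightarrow> S \<subseteq> V \<and> (\<forall>x\<in>S. \<forall>y\<in>S. (x,y) \<in> (E \<inter> (S \<times> S))\<^sup>*)"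

text \<open>A tree: a nonempty connected graph with |N|-1 undirected edges.\<close>
definition tree :: "'b set \<Rightarrow> ('b \<times> 'b) set \<Rightarrow> bool" where
  "tree N F \<longleftrightarrow> graph N F \<and> N \<noteq> {} \<and> connected_in N F N \<and> card F = 2 * (card N - 1)"

definition tree_decomp ::
  "'a set \<Rightarrow> ('a \<times> 'a) set \<Rightarrow> 'b set \<Rightarrow> ('b \<times> 'b) set \<Rightarrow> ('b \<Rightarrow> 'a set) \<Rightarrow> bool" where
  "tree_decomp V E N F B \<longleftrightarrow> tree N F \<and> (\<forall>z\<in>N. B z \<subseteq> V)
     \<and> (\<forall>v\<in>V. \<exists>z\<in>N. v \<in> B z)
     \<and> (\<forall>(u,v)\<in>E. \<exists>z\<in>N. u \<in> B z \<and> v \<in> B z)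
     \<and> (\<forall>v\<in>V. connected_in N F {z\<in>N. v \<in> B z})"

definition width :: "'b set \<Rightarrow> ('b \<Rightarrow> 'a set) \<Rightarrow> int" where
  "width N B = Max ((\<lambda>z. int (card (B z))) ` N) - 1"

text \<open>Treewidth: least width of a tree decomposition (tree nodes taken from nat,
which suffices for finite graphs).\<close>
definition treewidth :: "'a set \<Rightarrow> ('a \<times> 'a) set \<Rightarrow> int" where
  "treewidth V E = (LEAST w. \<exists>N F (B :: nat \<Rightarrow> 'a set). tree_decomp V E N F B \<and> width N B = w)"

text \<open>k-sparse w.r.t. a family of subgraphs (identified with vertex sets).\<close>
definition sparse_wrt :: "nat \<Rightarrow> 'a set set \<Rightarrow> 'b set \<Rightarrow> ('b \<Rightarrow> 'a set) \<Rightarrow> bool" where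
  "sparse_wrt k \<H> N B \<longleftrightarrow> (\<forall>z\<in>N. card {H\<in>\<H>. B z \<inter> H \<noteq> {}} \<le> k)"

definition dual_support :: "'a set \<Rightarrow> 'a set set \<Rightarrow> ('a set \<times> 'a set) set \<Rightarrow> bool" where
  "dual_support V \<H> Q \<longleftrightarrow> graph \<H> Q \<and> (\<forall>v\<in>V. connected_in \<H> Q {H\<in>\<H>. v \<in> H})"

end

theory Submission
  imports Defs
begin

text \<open>The intersection graph of \<open>\<H>\<close> is a dual support, because every \<open>\<H>\<^sub>v\<close> is a clique
in it. Replacing each bag \<open>B z\<close> by the members of \<open>\<H>\<close> that meet it yields a tree
decomposition of the intersection graph: the nodes whose bags meet a connected member form a
subtree (glue the subtrees of its vertices along its edges), and two intersecting members share
a bag containing a common vertex. By sparseness these bags have at most \<open>k\<close> elements, plus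
possibly the empty member, so the width is at most \<open>k\<close>.\<close>

lemma rtrancl_map_prod_image:
  assumes "(x, y) \<in> R\<^sup>*"
  shows "(f x, f y) \<in> (map_prod f f ` R)\<^sup>*"
  using assms
proof (induction rule: rtrancl_induct)
  case (step y z)
  then have "(f y, f z) \<in> map_prod f f ` R" by force
  with step.IH show ?case by (rule rtrancl_into_rtrancl)
qed simp

lemma connected_in_image:
  assumes "connected_in V E S"
  shows "connected_in (f ` V) (map_prod f f ` E) (f ` S)"
  unfolding connected_in_def
proof (intro conjI ballI)
  show "f ` S \<subseteq> f ` V" using assms unfolding connected_in_def by auto
next
  fix x' y' assume "x' \<in> f ` S" "y' \<in> f ` S"
  then obtain x y where xy: "x \<in> S" "y \<in> S" "x' = f x" "y' = f y" by auto
  then have "(x, y) \<in> (E \<inter> S \<times> S)\<^sup>*" using assms unfolding connected_in_def by auto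
  then have "(f x, f y) \<in> (map_prod f f ` (E \<inter> S \<times> S))\<^sup>*" by (rule rtrancl_map_prod_image)
  moreover have "map_prod f f ` (E \<inter> S \<times> S) \<subseteq> map_prod f f ` E \<inter> f ` S \<times> f ` S" by auto
  ultimately show "(x', y') \<in> (map_prod f f ` E \<inter> f ` S \<times> f ` S)\<^sup>*"
    using xy rtrancl_mono by blast
qed

lemma graph_image:
  assumes "graph V E" and "inj_on f V"
  shows "graph (f ` V) (map_prod f f ` E)"
  unfolding graph_def
proof (intro conjI allI impI)
  show "finite (f ` V)" "map_prod f f ` E \<subseteq> f ` V \<times> f ` V"
    using assms(1) unfolding graph_def by auto
next
  fix x y assume "(x, y) \<in> map_prod f f ` E"
  then show "(y, x) \<in> map_prod f f ` E" using assms(1) unfolding graph_def by force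
next
  fix x show "(x, x) \<notin> map_prod f f ` E"
  proof
    assume "(x, x) \<in> map_prod f f ` E"
    then obtain a b where ab: "(a, b) \<in> E" "f a = f b" by auto
    then have "a = b" using assms unfolding graph_def inj_on_def by blast
    with ab show False using assms(1) unfolding graph_def by auto
  qed
qed

lemma tree_image:
  assumes "tree N F" and "inj_on f N"
  shows "tree (f ` N) (map_prod f f ` F)"
proof -
  have "F \<subseteq> N \<times> N" using assms(1) unfolding tree_def graph_def by auto
  then have "card (map_prod f f ` F) = card F"
    using map_prod_inj_on[OF assms(2) assms(2)] inj_on_subset card_image by blast
  then show ?thesis
    using assms graph_image connected_in_image card_image[OF assms(2)]
    unfolding tree_def by auto
qed

lemma tree_decomp_reindex:
  assumes "tree_decomp V E N F B" and "inj_on f N"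
  shows "tree_decomp V E (f ` N) (map_prod f f ` F) (B \<circ> inv_into N f)"
    and "width (f ` N) (B \<circ> inv_into N f) = width N B"
proof -
  let ?B' = "B \<circ> inv_into N f"
  have B': "?B' (f z) = B z" if "z \<in> N" for z using assms(2) that by simp
  have nodes: "{z \<in> f ` N. v \<in> ?B' z} = f ` {z \<in> N. v \<in> B z}" for v
    using B' by force
  show "tree_decomp V E (f ` N) (map_prod f f ` F) ?B'"
    using assms tree_image connected_in_image
    unfolding tree_decomp_def nodes by (fastforce simp: B')
  have "(\<lambda>z. int (card (?B' z))) ` f ` N = (\<lambda>z. int (card (B z))) ` N"
    using B' by (force simp: image_image)
  then show "width (f ` N) ?B' = width N B" unfolding width_def by simp
qed

lemma int_Least_le:
  fixes x c :: int
  assumes "P x" and "\<And>y. P y \<Longrightarrow> c \<le> y"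
  shows "(LEAST y. P y) \<le> x"
proof -
  define S where "S = {y. P y \<and> y \<le> x}"
  have "finite S" by (rule finite_subset[of _ "{c..x}"]) (auto simp: S_def assms(2))
  moreover have "x \<in> S" using assms(1) by (simp add: S_def)
  ultimately have "Min S \<in> S" and "Min S \<le> x" using Min_in Min_le by blast+
  have "(LEAST y. P y) = Min S"
  proof (rule Least_equality)
    show "P (Min S)" using \<open>Min S \<in> S\<close> by (simp add: S_def)
    show "Min S \<le> y" if "P y" for y
      using that \<open>finite S\<close> \<open>Min S \<le> x\<close> by (cases "y \<le> x") (auto simp: S_def)
  qed
  with \<open>Min S \<le> x\<close> show ?thesis by simp
qed

lemma width_ge_minus_one:
  assumes "tree_decomp V E N F B"
  shows "width N B \<ge> -1"
proof -
  have "finite N" "N \<noteq> {}" using assms unfolding tree_decomp_def tree_def graph_def by auto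
  then have "Max ((\<lambda>z. int (card (B z))) ` N) \<in> (\<lambda>z. int (card (B z))) ` N" by simp
  then show ?thesis unfolding width_def by auto
qed

lemma treewidth_le_width:
  fixes N :: "'b set" and B :: "'b \<Rightarrow> 'a set"
  assumes "tree_decomp V E N F B"
  shows "treewidth V E \<le> width N B"
proof -
  have "finite N" using assms unfolding tree_decomp_def tree_def graph_def by auto
  then obtain f :: "'b \<Rightarrow> nat" where "inj_on f N"
    using ex_bij_betw_finite_nat bij_betw_imp_inj_on by blast
  note reindexed = tree_decomp_reindex[OF assms this]
  show ?thesis
    unfolding treewidth_def
  proof (rule int_Least_le)
    show "\<exists>N' F' (B' :: nat \<Rightarrow> 'a set). tree_decomp V E N' F' B' \<and> width N' B' = width N B"
      using reindexed by blast
  qed (use width_ge_minus_one in blast)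
qed

definition intersection_graph :: "'a set set \<Rightarrow> ('a set \<times> 'a set) set" where
  "intersection_graph \<H> = {(H, H'). H \<in> \<H> \<and> H' \<in> \<H> \<and> H \<noteq> H' \<and> H \<inter> H' \<noteq> {}}"

lemma graph_intersection_graph:
  assumes "finite \<H>"
  shows "graph \<H> (intersection_graph \<H>)"
  using assms unfolding graph_def intersection_graph_def by auto

lemma dual_support_intersection_graph:
  assumes "finite \<H>"
  shows "dual_support V \<H> (intersection_graph \<H>)"
  unfolding dual_support_def connected_in_def
proof (intro conjI ballI graph_intersection_graph[OF assms])
  fix v H H' assume "H \<in> {H \<in> \<H>. v \<in> H}" "H' \<in> {H \<in> \<H>. v \<in> H}"
  then have "H = H' \<or> (H, H') \<in> intersection_graph \<H> \<inter> {H \<in> \<H>. v \<in> H} \<times> {H \<in> \<H>. v \<in> H}"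
    unfolding intersection_graph_def by auto
  then show "(H, H') \<in> (intersection_graph \<H> \<inter> {H \<in> \<H>. v \<in> H} \<times> {H \<in> \<H>. v \<in> H})\<^sup>*"
    by blast
qed simp

lemma connected_in_nodes_meeting:
  assumes td: "tree_decomp V E N F B" and H: "connected_in V E H"
  shows "connected_in N F {z \<in> N. H \<inter> B z \<noteq> {}}"
proof -
  define Z where "Z = {z \<in> N. H \<inter> B z \<noteq> {}}"
  have same_vertex: "(w, y) \<in> (F \<inter> Z \<times> Z)\<^sup>*"
    if "d \<in> H" "w \<in> N" "y \<in> N" "d \<in> B w" "d \<in> B y" for d w y
  proof -
    have "d \<in> V" using H that unfolding connected_in_def by auto
    then have "(w, y) \<in> (F \<inter> {z \<in> N. d \<in> B z} \<times> {z \<in> N. d \<in> B z})\<^sup>*"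
      using td that unfolding tree_decomp_def connected_in_def by auto
    moreover have "F \<inter> {z \<in> N. d \<in> B z} \<times> {z \<in> N. d \<in> B z} \<subseteq> F \<inter> Z \<times> Z"
      unfolding Z_def using that by auto
    ultimately show ?thesis using rtrancl_mono by blast
  qed
  have along_path: "(x, y) \<in> (F \<inter> Z \<times> Z)\<^sup>*"
    if "(a, b) \<in> (E \<inter> H \<times> H)\<^sup>*" "a \<in> H" "x \<in> N" "a \<in> B x" "y \<in> N" "b \<in> B y" for a b x y
    using that(1,5,6)
  proof (induction arbitrary: y rule: rtrancl_induct)
    case base
    then show ?case using same_vertex that(2-4) by blast
  next
    case (step c d)
    then obtain w where w: "w \<in> N" "c \<in> B w" "d \<in> B w"
      using td unfolding tree_decomp_def by fastforce
    have "(x, w) \<in> (F \<inter> Z \<times> Z)\<^sup>*" using step.IH w by blast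
    moreover have "(w, y) \<in> (F \<inter> Z \<times> Z)\<^sup>*" using step same_vertex w by blast
    ultimately show ?case by (rule rtrancl_trans)
  qed
  show ?thesis
    unfolding Z_def[symmetric] connected_in_def
  proof (intro conjI ballI)
    fix x y assume "x \<in> Z" "y \<in> Z"
    then obtain a b where "a \<in> H" "a \<in> B x" "b \<in> H" "b \<in> B y" "x \<in> N" "y \<in> N"
      unfolding Z_def by auto
    moreover from this have "(a, b) \<in> (E \<inter> H \<times> H)\<^sup>*" using H unfolding connected_in_def by auto
    ultimately show "(x, y) \<in> (F \<inter> Z \<times> Z)\<^sup>*" using along_path by blast
  qed (auto simp: Z_def)
qed

text \<open>The empty member meets no bag; it is put into every bag so that it is still covered.\<close>

definition meeting_members :: "'a set set \<Rightarrow> ('b \<Rightarrow> 'a set) \<Rightarrow> 'b \<Rightarrow> 'a set set" where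
  "meeting_members \<H> B z = {H \<in> \<H>. H \<inter> B z \<noteq> {}} \<union> (\<H> \<inter> {{}})"

lemma tree_decomp_intersection_graph:
  assumes td: "tree_decomp V E N F B" and conn: "\<forall>H\<in>\<H>. connected_in V E H"
  shows "tree_decomp \<H> (intersection_graph \<H>) N F (meeting_members \<H> B)"
proof -
  have tr: "tree N F" and cov: "\<forall>v\<in>V. \<exists>z\<in>N. v \<in> B z"
    using td unfolding tree_decomp_def by auto
  have HV: "H \<subseteq> V" if "H \<in> \<H>" for H using conn that unfolding connected_in_def by auto
  have shared_bag: "\<exists>z\<in>N. H \<in> meeting_members \<H> B z \<and> H' \<in> meeting_members \<H> B z"
    if "H \<in> \<H>" "H' \<in> \<H>" "v \<in> H" "v \<in> H'" for H H' v
    using that HV cov unfolding meeting_members_def by blast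
  have subtree: "connected_in N F {z \<in> N. H \<in> meeting_members \<H> B z}" if "H \<in> \<H>" for H
  proof (cases "H = {}")
    case True
    with that tr show ?thesis unfolding meeting_members_def tree_def by simp
  next
    case False
    then have "{z \<in> N. H \<in> meeting_members \<H> B z} = {z \<in> N. H \<inter> B z \<noteq> {}}"
      using that unfolding meeting_members_def by auto
    then show ?thesis using connected_in_nodes_meeting[OF td] conn that by simp
  qed
  have "N \<noteq> {}" using tr unfolding tree_def by simp
  then have covered: "\<exists>z\<in>N. H \<in> meeting_members \<H> B z" if "H \<in> \<H>" for H
    using that shared_bag[of H H] unfolding meeting_members_def by (cases "H = {}") auto
  show ?thesis
    unfolding tree_decomp_def
    using tr covered subtree shared_bag
    by (auto simp: meeting_members_def intersection_graph_def)
qed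

lemma width_meeting_members:
  assumes "tree_decomp V E N F B" and "sparse_wrt k \<H> N B"
  shows "width N (meeting_members \<H> B) \<le> int k"
proof -
  have "finite N" "N \<noteq> {}" using assms(1) unfolding tree_decomp_def tree_def graph_def by auto
  have "card (meeting_members \<H> B z) \<le> k + 1" if "z \<in> N" for z
  proof -
    have "card (meeting_members \<H> B z) \<le> card {H \<in> \<H>. H \<inter> B z \<noteq> {}} + card (\<H> \<inter> {{}})"
      unfolding meeting_members_def by (rule card_Un_le)
    moreover have "card {H \<in> \<H>. H \<inter> B z \<noteq> {}} \<le> k"
      using assms(2) that unfolding sparse_wrt_def by (simp add: Int_commute)
    moreover have "card (\<H> \<inter> {{}}) \<le> 1"
      using card_mono[of "{{}}" "\<H> \<inter> {{}}"] by auto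
    ultimately show ?thesis by linarith
  qed
  then have "Max ((\<lambda>z. int (card (meeting_members \<H> B z))) ` N) \<le> int k + 1"
    using \<open>finite N\<close> \<open>N \<noteq> {}\<close> by (subst Max_le_iff) fastforce+
  then show ?thesis unfolding width_def by simp
qed

theorem mainTheorem10:
  fixes V :: "'a set" and E :: "('a \<times> 'a) set" and \<H> :: "'a set set"
    and N :: "'b set" and F :: "('b \<times> 'b) set" and B :: "'b \<Rightarrow> 'a set" and k :: nat
  assumes "graph V E"
    and "\<forall>H\<in>\<H>. H \<subseteq> V \<and> connected_in V E H"
    and "tree_decomp V E N F B"
    and "sparse_wrt k \<H> N B"
  shows "\<exists>Q. dual_support V \<H> Q \<and> treewidth \<H> Q \<le> int k"
proof -
  have "finite \<H>"
    using assms(1,2) finite_Pow_iff[of V] finite_subset[of \<H> "Pow V"] unfolding graph_def by auto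
  then have "dual_support V \<H> (intersection_graph \<H>)"
    by (rule dual_support_intersection_graph)
  moreover have "tree_decomp \<H> (intersection_graph \<H>) N F (meeting_members \<H> B)"
    using assms(2,3) tree_decomp_intersection_graph by blast
  then have "treewidth \<H> (intersection_graph \<H>) \<le> int k"
    using treewidth_le_width width_meeting_members[OF assms(3,4)] order_trans by blast
  ultimately show ?thesis by blast
qed

end
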